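(* On $\mathcal M_F$, for every $\ell\ge1$ and $1\le i\le k$: (1) $\nabla^\ell R(\partial_{u_0},\partial_{u_i},\partial_{u_i},\partial_{s_i};\partial_{u_i},\dots,\partial_{u_i})=f_i^{(\ell+1)}(u_i)$. (2) $\nabla^\ell R(\partial_{u_0},\partial_{u_i},\partial_{u_i},\partial_{u_0};\partial_{u_i},\dots,\partial_{u_i})$ is a function of $u_i$ alone, expressible as an algebraic combination of $f_i(u_i)$ and its derivatives. (3) $\nabla^\ell R(X_1,X_2,X_3,X_4;Y_1,\dots,Y_{\ell-1},\partial_{s_i})=0$ for all tangent vectors $X_1,\dots,X_4,Y_1,\dots,Y_{\ell-1}$. (4) $\nabla^\ell R(X_1,X_2,X_3,X_4;Y_1,\dots,Y_{\ell-1},\partial_{u_0})=0$ for all tangent vectors $X_1,\dots,X_4,Y_1,\dots,Y_{\ell-1}$.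
   Context: Fix an integer $k\ge 1$ and signs $\varepsilon_1,\dots,\varepsilon_k\in\{\pm1\}$. Let $f_1,\dots,f_k:\mathbb R\to\mathbb R$ be smooth, $F=(f_1,\dots,f_k)$. On $\mathbb R^{3k+2}$ with coordinates $(u_0,\dots,u_k,v_0,\dots,v_k,s_1,\dots,s_k)$ let $g_F$ be the symmetric metric whose only nonzero components on coordinate vector fields are (up to symmetry), for $1\le i\le k$ and $0\le i',j\le k$: $g_F(\partial_{u_0},\partial_{u_i})=2f_i(u_i)s_i$, $g_F(\partial_{u_i},\partial_{u_i})=-2u_0s_i$, $g_F(\partial_{u_{i'}},\partial_{v_j})=\delta_{i'j}$, $g_F(\partial_{s_i},\partial_{s_i})=\varepsilon_i$; $\mathcal M_F=(\mathbb R^{3k+2},g_F)$. $\nabla$ is the Levi-Civita connection, $R(X,Y,Z,W)=g_F(\nabla_X\nabla_YZ-\nabla_Y\nabla_XZ-\nabla_{[X,Y]}Z,W)$, $\nabla^0R=R$, and $\nabla^\ell R(X_1,\dots,X_4;Y_1,\dots,Y_\ell)=(\nabla_{Y_\ell}\nabla^{\ell-1}R)(X_1,\dots,X_4;Y_1,\dots,Y_{\ell-1})$. *)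

theory Defs
  imports "HOL-Analysis.Analysis"
begin

text \<open>Points of the coordinate space R^n are represented as functions nat => real;
  only the components with index < n are coordinates. Tangent vectors at a point
  are likewise given by their components (nat => real) in the coordinate frame.
  A metric in coordinates is g a b x = g(partial_a, partial_b) at the point x.\<close>

definition pd :: "nat \<Rightarrow> ((nat \<Rightarrow> real) \<Rightarrow> real) \<Rightarrow> (nat \<Rightarrow> real) \<Rightarrow> real" where
  "pd c h x = deriv (\<lambda>t. h (x(c := t))) (x c)"

text \<open>Christoffel symbols of the first kind: g(nabla_a partial_b, partial_c).\<close>
definition christ1 :: "(nat \<Rightarrow> nat \<Rightarrow> (nat \<Rightarrow> real) \<Rightarrow> real) \<Rightarrow> nat \<Rightarrow> nat \<Rightarrow> nat \<Rightarrow> (nat \<Rightarrow> real) \<Rightarrow> real" where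
  "christ1 g a b c x = (pd a (g b c) x + pd b (g a c) x - pd c (g a b) x) / 2"

text \<open>Christoffel symbols of the second kind: christ2 n g a b x m is the m-th
  component of nabla_a partial_b at x (Levi-Civita connection), i.e. the unique
  solution of the linear system given by the first-kind symbols.\<close>
definition christ2 :: "nat \<Rightarrow> (nat \<Rightarrow> nat \<Rightarrow> (nat \<Rightarrow> real) \<Rightarrow> real) \<Rightarrow> nat \<Rightarrow> nat \<Rightarrow> (nat \<Rightarrow> real) \<Rightarrow> nat \<Rightarrow> real" where
  "christ2 n g a b x = (THE v. (\<forall>m. n \<le> m \<longrightarrow> v m = 0) \<and>
      (\<forall>c<n. (\<Sum>m<n. v m * g m c x) = christ1 g a b c x))"

text \<open>Coordinate vector field partial_c, and the covariant derivative nabla_a V of a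
  vector field V (given by its components V x p).\<close>
definition coord_field :: "nat \<Rightarrow> (nat \<Rightarrow> real) \<Rightarrow> nat \<Rightarrow> real" where
  "coord_field c = (\<lambda>x p. if p = c then 1 else 0)"

definition cov_vec :: "nat \<Rightarrow> (nat \<Rightarrow> nat \<Rightarrow> (nat \<Rightarrow> real) \<Rightarrow> real) \<Rightarrow> nat
    \<Rightarrow> ((nat \<Rightarrow> real) \<Rightarrow> nat \<Rightarrow> real) \<Rightarrow> (nat \<Rightarrow> real) \<Rightarrow> nat \<Rightarrow> real" where
  "cov_vec n g a V = (\<lambda>x p. pd a (\<lambda>y. V y p) x + (\<Sum>m<n. V x m * christ2 n g a m x p))"

text \<open>Riemann curvature tensor R(partial_a, partial_b, partial_c, partial_d)
  = g(nabla_a nabla_b partial_c - nabla_b nabla_a partial_c, partial_d)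
  (the bracket of coordinate fields vanishes).\<close>
definition riem :: "nat \<Rightarrow> (nat \<Rightarrow> nat \<Rightarrow> (nat \<Rightarrow> real) \<Rightarrow> real) \<Rightarrow> nat \<Rightarrow> nat \<Rightarrow> nat \<Rightarrow> nat
    \<Rightarrow> (nat \<Rightarrow> real) \<Rightarrow> real" where
  "riem n g a b c d x = (\<Sum>p<n. (cov_vec n g a (cov_vec n g b (coord_field c)) x p
        - cov_vec n g b (cov_vec n g a (coord_field c)) x p) * g p d x)"

text \<open>Covariant tensor fields are given by their components T x [a_1,...,a_r].
  The covariant derivative nabla T has one more slot, placed last:
  (nabla T)(...; c) = (nabla_c T)(...).\<close>
definition cov_tensor :: "nat \<Rightarrow> (nat \<Rightarrow> nat \<Rightarrow> (nat \<Rightarrow> real) \<Rightarrow> real)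
    \<Rightarrow> ((nat \<Rightarrow> real) \<Rightarrow> nat list \<Rightarrow> real) \<Rightarrow> (nat \<Rightarrow> real) \<Rightarrow> nat list \<Rightarrow> real" where
  "cov_tensor n g T = (\<lambda>x is. let c = last is; js = butlast is in
      pd c (\<lambda>y. T y js) x
      - (\<Sum>j<length js. \<Sum>m<n. christ2 n g c (js ! j) x m * T x (js[j := m])))"

definition nabla_R :: "nat \<Rightarrow> (nat \<Rightarrow> nat \<Rightarrow> (nat \<Rightarrow> real) \<Rightarrow> real) \<Rightarrow> nat
    \<Rightarrow> (nat \<Rightarrow> real) \<Rightarrow> nat list \<Rightarrow> real" where
  "nabla_R n g l = (cov_tensor n g ^^ l) (\<lambda>x is. riem n g (is ! 0) (is ! 1) (is ! 2) (is ! 3) x)"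

text \<open>Evaluation of a covariant tensor field at x on a list of tangent vectors
  (multilinear extension of the components).\<close>
definition tensor_apply :: "nat \<Rightarrow> ((nat \<Rightarrow> real) \<Rightarrow> nat list \<Rightarrow> real) \<Rightarrow> (nat \<Rightarrow> real)
    \<Rightarrow> (nat \<Rightarrow> real) list \<Rightarrow> real" where
  "tensor_apply n T x vs = (\<Sum>is\<in>{is. length is = length vs \<and> set is \<subseteq> {..<n}}.
      T x is * (\<Prod>j<length vs. (vs ! j) (is ! j)))"

text \<open>Coordinates on R^(3k+2): u_j has index j (0 \<le> j \<le> k), v_j has index k+1+j,
  s_i has index 2k+1+i (1 \<le> i \<le> k).\<close>
definition vidx :: "nat \<Rightarrow> nat \<Rightarrow> nat" where "vidx k j = k + 1 + j"
definition sidx :: "nat \<Rightarrow> nat \<Rightarrow> nat" where "sidx k i = 2 * k + 1 + i"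

text \<open>The metric g_F (f i and eps i are used for 1 \<le> i \<le> k).\<close>
definition gF :: "nat \<Rightarrow> (nat \<Rightarrow> real) \<Rightarrow> (nat \<Rightarrow> real \<Rightarrow> real) \<Rightarrow> nat \<Rightarrow> nat
    \<Rightarrow> (nat \<Rightarrow> real) \<Rightarrow> real" where
  "gF k eps f a b x =
     (if a = 0 \<and> 1 \<le> b \<and> b \<le> k then 2 * f b (x b) * x (sidx k b)
      else if b = 0 \<and> 1 \<le> a \<and> a \<le> k then 2 * f a (x a) * x (sidx k a)
      else if a = b \<and> 1 \<le> a \<and> a \<le> k then - 2 * x 0 * x (sidx k a)
      else if a \<le> k \<and> b = vidx k a then 1
      else if b \<le> k \<and> a = vidx k b then 1
      else if a = b \<and> sidx k 1 \<le> a \<and> a \<le> sidx k k then eps (a - (2 * k + 1))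
      else 0)"

definition cvec :: "nat \<Rightarrow> nat \<Rightarrow> real" where
  "cvec a = (\<lambda>p. if p = a then 1 else 0)"

text \<open>Value of a real polynomial in variables y_0..y_N, given as a finite set E of
  exponent vectors with coefficients c.\<close>
definition jet_poly :: "nat \<Rightarrow> (nat \<Rightarrow> nat) set \<Rightarrow> ((nat \<Rightarrow> nat) \<Rightarrow> real) \<Rightarrow> (nat \<Rightarrow> real) \<Rightarrow> real" where
  "jet_poly N E c y = (\<Sum>e\<in>E. c e * (\<Prod>j\<le>N. y j ^ e j))"

end

theory Submission imports Defs begin

text \<open>The only non-constant coefficients of g = g_F, namely g(\<partial>u_0,\<partial>u_i) = 2 f_i(u_i) s_i and
  g(\<partial>u_i,\<partial>u_i) = -2 u_0 s_i, involve only the coordinates u_0, u_i, s_i of one block i,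
  and the v-coordinates are dual to the u-coordinates. Hence the Christoffel symbols, and by induction
  every component of \<nabla>^l R, split into block contributions: the component on an index list is a
  sum over i of a polynomial in the derivatives of f_i at u_i, supported on lists with entries in
  {u_0, u_i, s_i} containing s_i at most once.

  Moreover \<nabla>^l R is annihilated by the derivation that replaces one slot \<partial>u_i by \<partial>s_i.
  For R this is read off its explicit table; it is preserved by \<nabla>, and it cancels the
  Christoffel terms \<Gamma>^(s_i)_(i i) = \<epsilon>_i u_0. What remains of \<nabla>_c is
  \<partial>_c plus \<epsilon>_i f_i times the replacement of a u_0- or u_i-slot by s_i. So a last slot
  \<partial>s_i or \<partial>u_0 gives zero, and along (\<partial>u_0,\<partial>u_i,\<partial>u_i,\<partial>s_i; \<partial>u_i,...,\<partial>u_i)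
  only \<partial>u_i acts, producing f_i^(l+1).\<close>

section \<open>Coordinate formulas\<close>

lemma sum_eq_single:
  assumes "finite A" "a \<in> A" "\<And>b. b \<in> A \<Longrightarrow> b \<noteq> a \<Longrightarrow> h b = 0"
  shows "sum h A = h a"
  using assms by (simp add: sum.remove sum.neutral)

lemma pd_eqI:
  assumes "((\<lambda>t. h (x(c := t))) has_real_derivative D) (at (x c))"
  shows "pd c h x = D"
  using assms by (simp add: pd_def DERIV_imp_deriv)

lemma pd_const [simp]: "pd c (\<lambda>y. a) x = 0"
  by (simp add: pd_def)

definition nondegenerate :: "nat \<Rightarrow> (nat \<Rightarrow> nat \<Rightarrow> (nat \<Rightarrow> real) \<Rightarrow> real) \<Rightarrow> (nat \<Rightarrow> real) \<Rightarrow> bool" where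
  "nondegenerate n g x \<longleftrightarrow>
     (\<forall>w. (\<forall>m. n \<le> m \<longrightarrow> w m = 0) \<longrightarrow> (\<forall>c<n. (\<Sum>m<n. w m * g m c x) = 0) \<longrightarrow> (\<forall>m. w m = 0))"

lemma nondegenerateD:
  assumes "nondegenerate n g x" "\<forall>m. n \<le> m \<longrightarrow> w m = 0" "\<forall>c<n. (\<Sum>m<n. w m * g m c x) = 0"
  shows "w m = 0"
  using assms unfolding nondegenerate_def by blast

lemma christ2_eqI:
  assumes "nondegenerate n g x" and "\<forall>m. n \<le> m \<longrightarrow> v m = 0"
    and "\<forall>c<n. (\<Sum>m<n. v m * g m c x) = christ1 g a b c x"
  shows "christ2 n g a b x = v"
  unfolding christ2_def
proof (rule the_equality)
  fix w assume w: "(\<forall>m. n \<le> m \<longrightarrow> w m = 0) \<and> (\<forall>c<n. (\<Sum>m<n. w m * g m c x) = christ1 g a b c x)"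
  have "\<forall>m. n \<le> m \<longrightarrow> w m - v m = 0" using w assms(2) by simp
  moreover have "\<forall>c<n. (\<Sum>m<n. (w m - v m) * g m c x) = 0"
    using w assms(3) by (simp add: left_diff_distrib sum_subtractf)
  ultimately have "w m - v m = 0" for m
    by (rule nondegenerateD[OF assms(1)])
  then show "w = v" by (simp add: fun_eq_iff)
qed (use assms in simp)

lemma cov_vec_coord_field:
  assumes "c < n" shows "cov_vec n g b (coord_field c) = christ2 n g b c"
proof (intro ext)
  fix x p
  have "(\<Sum>m<n. (if m = c then 1 else 0) * christ2 n g b m x p)
      = (\<Sum>m<n. if m = c then christ2 n g b m x p else 0)"
    by (rule sum.cong) auto
  then show "cov_vec n g b (coord_field c) x p = christ2 n g b c x p"
    using assms by (simp add: cov_vec_def coord_field_def)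
qed

lemma riem_eq_cov_vec_christ2:
  assumes "c < n"
  shows "riem n g a b c d x =
    (\<Sum>p<n. (cov_vec n g a (christ2 n g b c) x p - cov_vec n g b (christ2 n g a c) x p) * g p d x)"
  using assms by (simp add: riem_def cov_vec_coord_field)

lemma tensor_apply_snoc_cvec_eq_0:
  assumes "\<And>ms. length ms = length vs \<Longrightarrow> set ms \<subseteq> {..<n} \<Longrightarrow> T x (ms @ [c]) = 0"
  shows "tensor_apply n T x (vs @ [cvec c]) = 0"
  unfolding tensor_apply_def
proof (rule sum.neutral, intro ballI)
  fix js assume "js \<in> {is. length is = length (vs @ [cvec c]) \<and> set is \<subseteq> {..<n}}"
  then have len: "length js = Suc (length vs)" and js: "set js \<subseteq> {..<n}" by auto
  then obtain ms e where js_eq: "js = ms @ [e]"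
    by (cases js rule: rev_cases) auto
  with len have "length ms = length vs" by simp
  show "T x js * (\<Prod>j<length (vs @ [cvec c]). ((vs @ [cvec c]) ! j) (js ! j)) = 0"
  proof (cases "e = c")
    case True
    then show ?thesis using assms \<open>length ms = length vs\<close> js js_eq by simp
  next
    case False
    have "((vs @ [cvec c]) ! length vs) (js ! length vs) = 0"
      using False \<open>length ms = length vs\<close> js_eq by (simp add: cvec_def nth_append)
    then show ?thesis by (simp add: prod_zero)
  qed
qed

section \<open>Differential polynomials\<close>

inductive diff_poly :: "(real \<Rightarrow> real) \<Rightarrow> (real \<Rightarrow> real) \<Rightarrow> bool" for f :: "real \<Rightarrow> real" where
  const: "diff_poly f (\<lambda>t. a)"
| deriv_iter: "diff_poly f ((deriv ^^ m) f)"
| add: "diff_poly f h1 \<Longrightarrow> diff_poly f h2 \<Longrightarrow> diff_poly f (\<lambda>t. h1 t + h2 t)"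
| mult: "diff_poly f h1 \<Longrightarrow> diff_poly f h2 \<Longrightarrow> diff_poly f (\<lambda>t. h1 t * h2 t)"

lemma diff_poly_sum:
  "finite A \<Longrightarrow> (\<And>j. j \<in> A \<Longrightarrow> diff_poly f (h j)) \<Longrightarrow> diff_poly f (\<lambda>t. \<Sum>j\<in>A. h j t)"
  by (induction A rule: finite_induct) (auto intro: diff_poly.const diff_poly.add)

lemma diff_poly_if: "(P \<Longrightarrow> diff_poly f h) \<Longrightarrow> diff_poly f (\<lambda>t. if P then h t else 0)"
  using diff_poly.const[of f 0] by (cases P) simp_all

context
  fixes f :: "real \<Rightarrow> real"
  assumes smooth: "\<And>m t. (deriv ^^ m) f differentiable (at t)"
begin

lemma diff_poly_has_deriv:
  assumes "diff_poly f h" shows "(h has_real_derivative deriv h t) (at t)"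
proof -
  from assms have "h differentiable (at t)"
    by induction (simp_all add: smooth)
  then show ?thesis by (simp add: DERIV_deriv_iff_real_differentiable)
qed

lemma diff_poly_deriv:
  assumes "diff_poly f h" shows "diff_poly f (deriv h)"
  using assms
proof induction
  case (const a)
  have "deriv (\<lambda>t. a) = (\<lambda>t. 0)" by (intro ext DERIV_imp_deriv) simp
  then show ?case by (simp add: diff_poly.const)
next
  case (deriv_iter m)
  show ?case using diff_poly.deriv_iter[of f "Suc m"] by simp
next
  case (add h1 h2)
  have "deriv (\<lambda>t. h1 t + h2 t) = (\<lambda>t. deriv h1 t + deriv h2 t)"
    using add.hyps by (intro ext DERIV_imp_deriv) (auto intro!: derivative_eq_intros diff_poly_has_deriv)
  then show ?case using add.IH by (simp add: diff_poly.add)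
next
  case (mult h1 h2)
  have "deriv (\<lambda>t. h1 t * h2 t) = (\<lambda>t. deriv h1 t * h2 t + h1 t * deriv h2 t)"
    using mult.hyps by (intro ext DERIV_imp_deriv) (auto intro!: derivative_eq_intros diff_poly_has_deriv)
  then show ?case using mult by (simp add: diff_poly.add diff_poly.mult)
qed

end

definition is_jet_poly :: "nat \<Rightarrow> ((nat \<Rightarrow> real) \<Rightarrow> real) \<Rightarrow> bool" where
  "is_jet_poly N p \<longleftrightarrow> (\<exists>E c. finite E \<and> p = jet_poly N E c)"

lemma is_jet_poly_const: "is_jet_poly N (\<lambda>y. a)"
  unfolding is_jet_poly_def
  by (intro exI[of _ "{\<lambda>_. 0}"] exI[of _ "\<lambda>_. a"]) (simp add: jet_poly_def fun_eq_iff)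

lemma is_jet_poly_var: "m \<le> N \<Longrightarrow> is_jet_poly N (\<lambda>y. y m)"
  unfolding is_jet_poly_def
proof (intro exI[of _ "{\<lambda>j. if j = m then 1 else 0}"] exI[of _ "\<lambda>_. 1"] conjI ext)
  fix y :: "nat \<Rightarrow> real" assume "m \<le> N"
  have "(\<Prod>j\<le>N. y j ^ (if j = m then 1 else 0)) = (\<Prod>j\<le>N. if j = m then y j else 1)"
    by (rule prod.cong) auto
  with \<open>m \<le> N\<close> show "y m = jet_poly N {\<lambda>j. if j = m then 1 else 0} (\<lambda>_. 1) y"
    by (simp add: jet_poly_def)
qed simp

lemma is_jet_poly_add:
  assumes "is_jet_poly N p1" "is_jet_poly N p2" shows "is_jet_poly N (\<lambda>y. p1 y + p2 y)"
proof -
  obtain E1 c1 E2 c2 where fin: "finite E1" "finite E2" and p: "p1 = jet_poly N E1 c1" "p2 = jet_poly N E2 c2"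
    using assms unfolding is_jet_poly_def by blast
  define c where "c e = (if e \<in> E1 then c1 e else 0) + (if e \<in> E2 then c2 e else 0)" for e
  define mon where "mon e y = (\<Prod>j\<le>N. (y j :: real) ^ e j)" for e y
  have "jet_poly N (E1 \<union> E2) c y = p1 y + p2 y" for y
  proof -
    have "jet_poly N (E1 \<union> E2) c y = (\<Sum>e\<in>E1 \<union> E2. if e \<in> E1 then c1 e * mon e y else 0)
        + (\<Sum>e\<in>E1 \<union> E2. if e \<in> E2 then c2 e * mon e y else 0)"
      unfolding jet_poly_def mon_def[symmetric] c_def sum.distrib[symmetric] by (rule sum.cong) (auto simp: distrib_right)
    also have "\<dots> = p1 y + p2 y"
      using fin unfolding p jet_poly_def mon_def[symmetric] by (simp add: sum.If_cases Int_absorb1)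
    finally show ?thesis .
  qed
  then show ?thesis using fin unfolding is_jet_poly_def by (intro exI[of _ "E1 \<union> E2"] exI[of _ c]) auto
qed

lemma is_jet_poly_mult:
  assumes "is_jet_poly N p1" "is_jet_poly N p2" shows "is_jet_poly N (\<lambda>y. p1 y * p2 y)"
proof -
  obtain E1 c1 E2 c2 where fin: "finite E1" "finite E2" and p: "p1 = jet_poly N E1 c1" "p2 = jet_poly N E2 c2"
    using assms unfolding is_jet_poly_def by blast
  define mon where "mon e y = (\<Prod>j\<le>N. (y j :: real) ^ e j)" for e y
  define add_exp where "add_exp q = (\<lambda>j. fst q j + snd q j)" for q :: "(nat \<Rightarrow> nat) \<times> (nat \<Rightarrow> nat)"
  define E where "E = add_exp ` (E1 \<times> E2)"
  define c where "c e = (\<Sum>q\<in>{q \<in> E1 \<times> E2. add_exp q = e}. c1 (fst q) * c2 (snd q))" for e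
  have fE: "finite E" using fin by (simp add: E_def)
  have mon_add: "mon (add_exp q) y = mon (fst q) y * mon (snd q) y" for q y
    by (simp add: mon_def add_exp_def power_add prod.distrib)
  have "jet_poly N E c y = p1 y * p2 y" for y
  proof -
    have "jet_poly N E c y = (\<Sum>e\<in>E. \<Sum>q\<in>{q \<in> E1 \<times> E2. add_exp q = e}. c1 (fst q) * c2 (snd q) * mon (add_exp q) y)"
      unfolding jet_poly_def mon_def[symmetric] c_def by (simp add: sum_distrib_right)
    also have "\<dots> = (\<Sum>q\<in>E1 \<times> E2. c1 (fst q) * c2 (snd q) * mon (add_exp q) y)"
      by (rule sum.group) (use fin fE in \<open>auto simp: E_def\<close>)
    also have "\<dots> = (\<Sum>q\<in>E1 \<times> E2. (c1 (fst q) * mon (fst q) y) * (c2 (snd q) * mon (snd q) y))"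
      by (rule sum.cong) (auto simp: mon_add)
    also have "\<dots> = p1 y * p2 y"
      unfolding p jet_poly_def mon_def[symmetric] sum_product sum.cartesian_product by (rule sum.cong) auto
    finally show ?thesis .
  qed
  then show ?thesis using fE unfolding is_jet_poly_def by (intro exI[of _ E] exI[of _ c]) auto
qed

text \<open>Representability at all large enough orders N, so that the jets of the two operands of a
  sum or product can be taken at a common order.\<close>

definition jet_expressible :: "(real \<Rightarrow> real) \<Rightarrow> (real \<Rightarrow> real) \<Rightarrow> bool" where
  "jet_expressible f h \<longleftrightarrow> (\<exists>N0. \<forall>N\<ge>N0. \<exists>p. is_jet_poly N p \<and> h = (\<lambda>t. p (\<lambda>j. (deriv ^^ j) f t)))"

lemma jet_expressible_binop:
  assumes closed: "\<And>N p1 p2. is_jet_poly N p1 \<Longrightarrow> is_jet_poly N p2 \<Longrightarrow> is_jet_poly N (\<lambda>y. comb (p1 y) (p2 y))"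
    and "jet_expressible f h1" "jet_expressible f h2"
  shows "jet_expressible f (\<lambda>t. comb (h1 t) (h2 t))"
proof -
  obtain N1 N2 where N1: "\<forall>N\<ge>N1. \<exists>p. is_jet_poly N p \<and> h1 = (\<lambda>t. p (\<lambda>j. (deriv ^^ j) f t))"
    and N2: "\<forall>N\<ge>N2. \<exists>p. is_jet_poly N p \<and> h2 = (\<lambda>t. p (\<lambda>j. (deriv ^^ j) f t))"
    using assms(2,3) unfolding jet_expressible_def by blast
  have "\<exists>p. is_jet_poly N p \<and> (\<lambda>t. comb (h1 t) (h2 t)) = (\<lambda>t. p (\<lambda>j. (deriv ^^ j) f t))"
    if N: "N1 \<le> N" "N2 \<le> N" for N
  proof -
    obtain p1 p2 where "is_jet_poly N p1" "h1 = (\<lambda>t. p1 (\<lambda>j. (deriv ^^ j) f t))"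
      "is_jet_poly N p2" "h2 = (\<lambda>t. p2 (\<lambda>j. (deriv ^^ j) f t))"
      using N1 N2 N by blast
    with closed show ?thesis by blast
  qed
  then show ?thesis unfolding jet_expressible_def by (intro exI[of _ "max N1 N2"]) simp
qed

lemma diff_poly_jet_expressible: "diff_poly f h \<Longrightarrow> jet_expressible f h"
proof (induction rule: diff_poly.induct)
  case (const a)
  show ?case unfolding jet_expressible_def
    by (intro exI[of _ 0] allI impI exI[of _ "\<lambda>y. a"]) (simp add: is_jet_poly_const)
next
  case (deriv_iter m)
  show ?case unfolding jet_expressible_def
    by (intro exI[of _ m] allI impI exI[of _ "\<lambda>y. y m"]) (simp add: is_jet_poly_var)
next
  case (add h1 h2)
  then show ?case using jet_expressible_binop[where comb = "(+)", OF is_jet_poly_add] by blast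
next
  case (mult h1 h2)
  then show ?case using jet_expressible_binop[where comb = "(*)", OF is_jet_poly_mult] by blast
qed

lemma diff_poly_jet_poly:
  assumes "diff_poly f h"
  shows "\<exists>N E c. finite E \<and> (\<forall>t. h t = jet_poly N E c (\<lambda>j. (deriv ^^ j) f t))"
proof -
  obtain N p where "is_jet_poly N p" "h = (\<lambda>t. p (\<lambda>j. (deriv ^^ j) f t))"
    using diff_poly_jet_expressible[OF assms] unfolding jet_expressible_def by blast
  then show ?thesis unfolding is_jet_poly_def by auto
qed

section \<open>The metric g_F and its curvature\<close>

datatype block_slot = U0 | Ui | Si

fun wedge_0i :: "block_slot \<Rightarrow> block_slot \<Rightarrow> real" where
  "wedge_0i U0 Ui = 1" | "wedge_0i Ui U0 = -1" | "wedge_0i _ _ = 0"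

fun wedge_is :: "block_slot \<Rightarrow> block_slot \<Rightarrow> real" where
  "wedge_is Ui Si = 1" | "wedge_is Si Ui = -1" | "wedge_is _ _ = 0"

definition riem_table :: "real \<Rightarrow> real \<Rightarrow> real \<Rightarrow> block_slot \<Rightarrow> block_slot \<Rightarrow> block_slot \<Rightarrow> block_slot \<Rightarrow> real" where
  "riem_table e y y' la lb lc ld = e * y\<^sup>2 * wedge_0i la lb * wedge_0i ld lc
     + (1 + y') * (wedge_0i la lb * wedge_is lc ld + wedge_is la lb * wedge_0i lc ld)"

lemma riem_table_shear:
  "(if la = Ui then riem_table e y y' Si lb lc ld else 0) + (if lb = Ui then riem_table e y y' la Si lc ld else 0)
   + (if lc = Ui then riem_table e y y' la lb Si ld else 0) + (if ld = Ui then riem_table e y y' la lb lc Si else 0)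
   = 0"
  by (cases la; cases lb; cases lc; cases ld) (simp_all add: riem_table_def)

lemma riem_table_two_Si:
  "2 \<le> length (filter (\<lambda>l. l = Si) [la, lb, lc, ld]) \<Longrightarrow> riem_table e y y' la lb lc ld = 0"
  by (cases la; cases lb; cases lc; cases ld) (simp_all add: riem_table_def)

lemma diff_poly_riem_table: "diff_poly f (\<lambda>t. riem_table e (f t) (deriv f t) la lb lc ld)"
  using diff_poly.deriv_iter[of f 0] diff_poly.deriv_iter[of f 1]
  unfolding riem_table_def power2_eq_square
  by (auto intro!: diff_poly.add diff_poly.mult diff_poly.const)

locale gF_metric =
  fixes k :: nat and eps :: "nat \<Rightarrow> real" and f :: "nat \<Rightarrow> real \<Rightarrow> real"
  assumes eps_sign: "i \<in> {1..k} \<Longrightarrow> eps i = 1 \<or> eps i = -1"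
    and smooth: "i \<in> {1..k} \<Longrightarrow> (deriv ^^ m) (f i) differentiable (at t)"
begin

abbreviation "g \<equiv> gF k eps f"
abbreviation "s i \<equiv> sidx k i"

definition dim :: nat where "dim = 3 * k + 2"

definition block :: "nat \<Rightarrow> nat set" where "block i = {0, i, s i}"

lemma eps_square: "i \<in> {1..k} \<Longrightarrow> eps i * eps i = 1"
  using eps_sign by force

lemma has_deriv_f_iter:
  "i \<in> {1..k} \<Longrightarrow> ((deriv ^^ m) (f i) has_real_derivative (deriv ^^ Suc m) (f i) t) (at t)"
  using smooth by (simp add: DERIV_deriv_iff_real_differentiable)

lemma sidx_simps [simp]:
  "s i \<noteq> 0" "0 < s i" "k < s i" "\<not> s i \<le> k" "j \<le> k \<Longrightarrow> s i \<noteq> j" "j \<le> k \<Longrightarrow> j \<noteq> s i"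
  "s i = s j \<longleftrightarrow> i = j" "i \<le> k \<Longrightarrow> s i < dim"
  "i \<in> {1..k} \<Longrightarrow> j \<le> k \<Longrightarrow> s i \<noteq> vidx k j"
  by (auto simp: sidx_def vidx_def dim_def)

lemma coord_lt_dim [simp]: "j \<le> k \<Longrightarrow> j < dim"
  by (simp add: dim_def)

lemma vidx_simps [simp]: "k < vidx k j" "\<not> vidx k j \<le> k" "j \<le> k \<Longrightarrow> vidx k j < dim" "vidx k j = vidx k j' \<longleftrightarrow> j = j'"
  by (auto simp: vidx_def dim_def)

lemma coord_cases [consumes 1, case_names u v s]:
  assumes "m < dim"
  obtains "m \<le> k" | j where "j \<le> k" "m = vidx k j" | i where "i \<in> {1..k}" "m = s i"
proof -
  consider "m \<le> k" | "k < m" "m \<le> 2 * k + 1" | "2 * k + 1 < m" using assms by linarith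
  then show thesis
  proof cases
    case 2
    then have "m = vidx k (m - (k + 1))" "m - (k + 1) \<le> k" by (auto simp: vidx_def)
    then show thesis using that(2) by blast
  next
    case 3
    then have "m = s (m - (2 * k + 1))" "m - (2 * k + 1) \<in> {1..k}"
      using assms by (auto simp: sidx_def dim_def)
    then show thesis using that(3) by blast
  qed (use that in blast)
qed

lemma block_simps [simp]:
  "0 \<in> block i" "i \<in> block i" "s i \<in> block i"
  "i \<in> {1..k} \<Longrightarrow> j \<le> k \<Longrightarrow> vidx k j \<notin> block i"
  "i \<in> {1..k} \<Longrightarrow> i' \<in> {1..k} \<Longrightarrow> s i \<in> block i' \<longleftrightarrow> i = i'"
  "i \<in> {1..k} \<Longrightarrow> dim \<le> m \<Longrightarrow> m \<notin> block i"
  by (auto simp: block_def sidx_def vidx_def dim_def)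

lemma gF_vidx_col: "j \<le> k \<Longrightarrow> g m (vidx k j) x = (if m = j then 1 else 0)"
  by (auto simp: gF_def vidx_def sidx_def)

lemma gF_s_col: "i \<in> {1..k} \<Longrightarrow> g m (s i) x = (if m = s i then eps i else 0)"
  by (auto simp: gF_def vidx_def sidx_def)

lemma gF_u_col: "c \<le> k \<Longrightarrow> k < m \<Longrightarrow> g m c x = (if m = vidx k c then 1 else 0)"
  by (auto simp: gF_def vidx_def sidx_def)

lemma has_deriv_f: "i \<in> {1..k} \<Longrightarrow> (f i has_real_derivative deriv (f i) t) (at t)"
  using has_deriv_f_iter[of i 0] by simp

lemma has_deriv_deriv_f: "i \<in> {1..k} \<Longrightarrow> (deriv (f i) has_real_derivative deriv (deriv (f i)) t) (at t)"
  using has_deriv_f_iter[of i 1] by (simp add: numeral_2_eq_2)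

text \<open>Derivatives of the block-i coefficients: dg_0i i e and dg_ii i e are \<partial>_e g(\<partial>u_0,\<partial>u_i)
  and \<partial>_e g(\<partial>u_i,\<partial>u_i); the ddg versions are their derivatives \<partial>_e' \<partial>_e.\<close>

definition dg_0i :: "nat \<Rightarrow> nat \<Rightarrow> (nat \<Rightarrow> real) \<Rightarrow> real" where
  "dg_0i i e x = (if e = i then 2 * deriv (f i) (x i) * x (s i) else if e = s i then 2 * f i (x i) else 0)"

definition dg_ii :: "nat \<Rightarrow> nat \<Rightarrow> (nat \<Rightarrow> real) \<Rightarrow> real" where
  "dg_ii i e x = (if e = 0 then -2 * x (s i) else if e = s i then -2 * x 0 else 0)"

definition ddg_0i :: "nat \<Rightarrow> nat \<Rightarrow> nat \<Rightarrow> (nat \<Rightarrow> real) \<Rightarrow> real" where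
  "ddg_0i i e' e x =
     (if e = i \<and> e' = i then 2 * deriv (deriv (f i)) (x i) * x (s i)
      else if e = i \<and> e' = s i \<or> e = s i \<and> e' = i then 2 * deriv (f i) (x i) else 0)"

definition ddg_ii :: "nat \<Rightarrow> nat \<Rightarrow> nat \<Rightarrow> (nat \<Rightarrow> real) \<Rightarrow> real" where
  "ddg_ii i e' e x = (if e = 0 \<and> e' = s i \<or> e = s i \<and> e' = 0 then -2 else 0)"

definition dg_block :: "nat \<Rightarrow> nat \<Rightarrow> nat \<Rightarrow> nat \<Rightarrow> (nat \<Rightarrow> real) \<Rightarrow> real" where
  "dg_block i e a b x =
     (if a = 0 \<and> b = i \<or> a = i \<and> b = 0 then dg_0i i e x else if a = i \<and> b = i then dg_ii i e x else 0)"

definition ddg_block :: "nat \<Rightarrow> nat \<Rightarrow> nat \<Rightarrow> nat \<Rightarrow> nat \<Rightarrow> (nat \<Rightarrow> real) \<Rightarrow> real" where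
  "ddg_block i e' e a b x =
     (if a = 0 \<and> b = i \<or> a = i \<and> b = 0 then ddg_0i i e' e x else if a = i \<and> b = i then ddg_ii i e' e x else 0)"

lemma has_deriv_g_0i:
  assumes "i \<in> {1..k}"
  shows "((\<lambda>t. 2 * f i ((x(e := t)) i) * (x(e := t)) (s i)) has_real_derivative dg_0i i e x) (at (x e))"
  using assms has_deriv_f[OF assms]
  by (cases "e = i"; cases "e = s i") (auto simp: dg_0i_def intro!: derivative_eq_intros)

lemma has_deriv_g_ii:
  "((\<lambda>t. -2 * (x(e := t)) 0 * (x(e := t)) (s i)) has_real_derivative dg_ii i e x) (at (x e))"
  by (cases "e = 0"; cases "e = s i") (auto simp: dg_ii_def intro!: derivative_eq_intros)

lemma has_deriv_dg_0i:
  assumes "i \<in> {1..k}"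
  shows "((\<lambda>t. dg_0i i e (x(e' := t))) has_real_derivative ddg_0i i e' e x) (at (x e'))"
  using assms has_deriv_f[OF assms] has_deriv_deriv_f[OF assms]
  by (cases "e = i"; cases "e = s i"; cases "e' = i"; cases "e' = s i")
    (auto simp: dg_0i_def ddg_0i_def intro!: derivative_eq_intros)

lemma has_deriv_dg_ii:
  "((\<lambda>t. dg_ii i e (x(e' := t))) has_real_derivative ddg_ii i e' e x) (at (x e'))"
  by (cases "e = 0"; cases "e = s i"; cases "e' = 0"; cases "e' = s i")
    (auto simp: dg_ii_def ddg_ii_def intro!: derivative_eq_intros)

lemma has_deriv_dg_block:
  assumes "i \<in> {1..k}"
  shows "((\<lambda>t. dg_block i e a b (x(e' := t))) has_real_derivative ddg_block i e' e a b x) (at (x e'))"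
proof -
  consider (mixed) "a = 0 \<and> b = i \<or> a = i \<and> b = 0"
    | (diag) "\<not> (a = 0 \<and> b = i \<or> a = i \<and> b = 0)" "a = i \<and> b = i"
    | (zero) "\<not> (a = 0 \<and> b = i \<or> a = i \<and> b = 0)" "\<not> (a = i \<and> b = i)"
    by blast
  then show ?thesis
  proof cases
    case mixed
    show ?thesis
      unfolding dg_block_def ddg_block_def if_P[OF mixed] by (rule has_deriv_dg_0i[OF assms])
  next
    case diag
    show ?thesis
      unfolding dg_block_def ddg_block_def if_not_P[OF diag(1)] if_P[OF diag(2)] by (rule has_deriv_dg_ii)
  next
    case zero
    then show ?thesis unfolding dg_block_def ddg_block_def if_not_P[OF zero(1)] if_not_P[OF zero(2)] by simp
  qed
qed

lemma sum_dg_block: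
  assumes "i \<in> {1..k}" "a = 0 \<and> b = i \<or> a = i \<and> b = 0 \<or> a = i \<and> b = i"
  shows "(\<Sum>i'\<in>{1..k}. dg_block i' e a b x) = dg_block i e a b x"
  using assms by (intro sum_eq_single) (auto simp: dg_block_def)

lemma has_deriv_gF:
  "((\<lambda>t. g a b (x(e := t))) has_real_derivative (\<Sum>i\<in>{1..k}. dg_block i e a b x)) (at (x e))"
proof -
  consider (mixed) i where "i \<in> {1..k}" "a = 0 \<and> b = i \<or> a = i \<and> b = 0"
    | (diag) i where "i \<in> {1..k}" "a = i" "b = i"
    | (const) "\<not> (a = 0 \<and> 1 \<le> b \<and> b \<le> k)" "\<not> (b = 0 \<and> 1 \<le> a \<and> a \<le> k)"
        "\<not> (a = b \<and> 1 \<le> a \<and> a \<le> k)"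
    by fastforce
  then show ?thesis
  proof cases
    case (mixed i)
    then have "(\<lambda>t. g a b (x(e := t))) = (\<lambda>t. 2 * f i ((x(e := t)) i) * (x(e := t)) (s i))"
      by (auto simp: gF_def)
    moreover have "(\<Sum>i'\<in>{1..k}. dg_block i' e a b x) = dg_0i i e x"
      using mixed by (subst sum_dg_block) (auto simp: dg_block_def)
    ultimately show ?thesis using has_deriv_g_0i[OF mixed(1)] by simp
  next
    case (diag i)
    then have "(\<lambda>t. g a b (x(e := t))) = (\<lambda>t. -2 * (x(e := t)) 0 * (x(e := t)) (s i))"
      by (auto simp: gF_def)
    moreover have "(\<Sum>i'\<in>{1..k}. dg_block i' e a b x) = dg_ii i e x"
      using diag by (subst sum_dg_block) (auto simp: dg_block_def)
    ultimately show ?thesis using has_deriv_g_ii by simp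
  next
    case const
    then have "g a b y = g a b x" for y unfolding gF_def by (simp only: if_False)
    then have "(\<lambda>t. g a b (x(e := t))) = (\<lambda>t. g a b x)" by (intro ext) blast
    moreover have "dg_block i e a b x = 0" if "i \<in> {1..k}" for i
      using const that by (auto simp: dg_block_def)
    ultimately show ?thesis by simp
  qed
qed

lemma pd_gF: "pd e (g a b) x = (\<Sum>i\<in>{1..k}. dg_block i e a b x)"
  by (rule pd_eqI[OF has_deriv_gF])

definition christ1_block :: "nat \<Rightarrow> nat \<Rightarrow> nat \<Rightarrow> nat \<Rightarrow> (nat \<Rightarrow> real) \<Rightarrow> real" where
  "christ1_block i a b c x = (dg_block i a b c x + dg_block i b a c x - dg_block i c a b x) / 2"

definition dchrist1_block :: "nat \<Rightarrow> nat \<Rightarrow> nat \<Rightarrow> nat \<Rightarrow> nat \<Rightarrow> (nat \<Rightarrow> real) \<Rightarrow> real" where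
  "dchrist1_block i e a b c x = (ddg_block i e a b c x + ddg_block i e b a c x - ddg_block i e c a b x) / 2"

lemma christ1_gF: "christ1 g a b c x = (\<Sum>i\<in>{1..k}. christ1_block i a b c x)"
  by (simp add: christ1_def pd_gF christ1_block_def sum_divide_distrib[symmetric] sum_subtractf sum.distrib)

lemma has_deriv_christ1_gF:
  "((\<lambda>t. christ1 g a b c (x(e := t))) has_real_derivative (\<Sum>i\<in>{1..k}. dchrist1_block i e a b c x)) (at (x e))"
proof -
  have "((\<lambda>t. christ1_block i a b c (x(e := t))) has_real_derivative dchrist1_block i e a b c x) (at (x e))"
    if "i \<in> {1..k}" for i
    unfolding christ1_block_def dchrist1_block_def using that
    by (auto intro!: derivative_eq_intros has_deriv_dg_block)
  then show ?thesis unfolding christ1_gF by (rule DERIV_sum)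
qed

lemma pd_christ1_gF: "pd e (christ1 g a b c) x = (\<Sum>i\<in>{1..k}. dchrist1_block i e a b c x)"
  by (rule pd_eqI[OF has_deriv_christ1_gF])

lemma dg_block_outside: "i \<in> {1..k} \<Longrightarrow> \<not> {e, a, b} \<subseteq> block i \<Longrightarrow> dg_block i e a b x = 0"
  by (auto simp: dg_block_def dg_0i_def dg_ii_def block_def)

lemma ddg_block_outside: "i \<in> {1..k} \<Longrightarrow> \<not> {e', e, a, b} \<subseteq> block i \<Longrightarrow> ddg_block i e' e a b x = 0"
  by (auto simp: ddg_block_def ddg_0i_def ddg_ii_def block_def)

lemma christ1_block_outside: "i \<in> {1..k} \<Longrightarrow> \<not> {a, b, c} \<subseteq> block i \<Longrightarrow> christ1_block i a b c x = 0"
  unfolding christ1_block_def using dg_block_outside[of i] by auto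

lemma dchrist1_block_outside:
  "i \<in> {1..k} \<Longrightarrow> \<not> {e, a, b, c} \<subseteq> block i \<Longrightarrow> dchrist1_block i e a b c x = 0"
  unfolding dchrist1_block_def using ddg_block_outside[of i] by auto

lemma christ1_block_s:
  "i \<in> {1..k} \<Longrightarrow> christ1_block i c b (s i) x =
     (if c = 0 \<and> b = i \<or> c = i \<and> b = 0 then - f i (x i) else if c = i \<and> b = i then x 0 else 0)"
  by (auto simp: christ1_block_def dg_block_def dg_0i_def dg_ii_def)

lemma christ1_gF_vidx:
  assumes "j \<le> k" "vidx k j \<in> {a, b, c}"
  shows "christ1 g a b c x = 0"
  unfolding christ1_gF using assms by (intro sum.neutral ballI christ1_block_outside) auto

lemma christ1_gF_s:
  assumes "i \<in> {1..k}" "s i \<in> {a, b, c}"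
  shows "christ1 g a b c x = christ1_block i a b c x"
  unfolding christ1_gF using assms by (intro sum_eq_single christ1_block_outside) auto

lemma christ1_gF_s_s: "i \<in> {1..k} \<Longrightarrow> j \<in> {1..k} \<Longrightarrow> christ1 g a (s i) (s j) x = 0"
  unfolding christ1_gF christ1_block_def
  by (intro sum.neutral ballI) (auto simp: dg_block_def sidx_def)

text \<open>Since g pairs u_j with v_j and no coefficient depends on a v-coordinate, \<Gamma>^m_(a b) vanishes
  for u-indices m, equals \<Gamma>_(a b u_j) for m = v_j and \<epsilon>_i \<Gamma>_(a b s_i) for m = s_i.\<close>

definition christ2_gF :: "nat \<Rightarrow> nat \<Rightarrow> (nat \<Rightarrow> real) \<Rightarrow> nat \<Rightarrow> real" where
  "christ2_gF a b x m =
     (if k < m \<and> m \<le> 2 * k + 1 then christ1 g a b (m - (k + 1)) x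
      else if 2 * k + 1 < m \<and> m < dim then eps (m - (2 * k + 1)) * christ1 g a b m x else 0)"

lemma christ2_gF_simps:
  "m \<le> k \<Longrightarrow> christ2_gF a b x m = 0"
  "j \<le> k \<Longrightarrow> christ2_gF a b x (vidx k j) = christ1 g a b j x"
  "i \<in> {1..k} \<Longrightarrow> christ2_gF a b x (s i) = eps i * christ1 g a b (s i) x"
  "dim \<le> m \<Longrightarrow> christ2_gF a b x m = 0"
  by (auto simp: christ2_gF_def vidx_def sidx_def dim_def)

lemma nondegenerate_gF: "nondegenerate dim g x"
  unfolding nondegenerate_def
proof (rule allI, intro impI)
  fix w :: "nat \<Rightarrow> real"
  assume big: "\<forall>m. dim \<le> m \<longrightarrow> w m = 0" and ker: "\<forall>c<dim. (\<Sum>m<dim. w m * g m c x) = 0"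
  have w_u: "w j = 0" if "j \<le> k" for j
  proof -
    have "(\<Sum>m<dim. w m * g m (vidx k j) x) = w j * g j (vidx k j) x"
      by (rule sum_eq_single) (use that in \<open>auto simp: gF_vidx_col dim_def\<close>)
    then show ?thesis using ker[rule_format, of "vidx k j"] that by (simp add: gF_vidx_col)
  qed
  have w_s: "w (s i) = 0" if "i \<in> {1..k}" for i
  proof -
    have "(\<Sum>m<dim. w m * g m (s i) x) = w (s i) * g (s i) (s i) x"
      by (rule sum_eq_single) (use that in \<open>auto simp: gF_s_col\<close>)
    then have "w (s i) * eps i = 0" using ker[rule_format, of "s i"] that by (simp add: gF_s_col)
    then show ?thesis using eps_square[OF that] by auto
  qed
  have w_v: "w (vidx k j) = 0" if "j \<le> k" for j
  proof -
    have "w m * g m j x = 0" if "m \<noteq> vidx k j" for m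
      using that \<open>j \<le> k\<close> w_u by (cases "m \<le> k") (auto simp: gF_u_col)
    then have "(\<Sum>m<dim. w m * g m j x) = w (vidx k j) * g (vidx k j) j x"
      by (intro sum_eq_single) (use that in auto)
    then show ?thesis using ker[rule_format, of j] that by (simp add: gF_u_col dim_def)
  qed
  show "\<forall>m. w m = 0"
  proof
    fix m
    show "w m = 0"
    proof (cases "m < dim")
      case True
      then show ?thesis by (cases rule: coord_cases) (auto simp: w_u w_v w_s)
    next
      case False
      then show ?thesis using big by simp
    qed
  qed
qed

lemma christ2_gF_solves:
  assumes "c < dim" shows "(\<Sum>m<dim. christ2_gF a b x m * g m c x) = christ1 g a b c x"
  using assms
proof (cases rule: coord_cases)
  case u
  have "christ2_gF a b x m * g m c x = 0" if "m \<noteq> vidx k c" for m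
    using that u by (cases "m \<le> k") (auto simp: christ2_gF_simps gF_u_col)
  then have "(\<Sum>m<dim. christ2_gF a b x m * g m c x) = christ2_gF a b x (vidx k c) * g (vidx k c) c x"
    by (intro sum_eq_single) (use u in auto)
  then show ?thesis using u by (simp add: christ2_gF_simps gF_u_col)
next
  case (v j)
  have "(\<Sum>m<dim. christ2_gF a b x m * g m c x) = christ2_gF a b x j * g j c x"
    by (rule sum_eq_single) (use v in \<open>auto simp: gF_vidx_col dim_def\<close>)
  then show ?thesis using v by (simp add: christ2_gF_simps christ1_gF_vidx)
next
  case (s i)
  have "(\<Sum>m<dim. christ2_gF a b x m * g m c x) = christ2_gF a b x c * g c c x"
    by (rule sum_eq_single) (use s in \<open>auto simp: gF_s_col\<close>)
  also have "\<dots> = (eps i * eps i) * christ1 g a b c x"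
    using s by (simp add: christ2_gF_simps gF_s_col)
  finally show ?thesis using eps_square[OF s(1)] by simp
qed

lemma christ2_gF: "christ2 dim g a b x = christ2_gF a b x"
  by (rule christ2_eqI[OF nondegenerate_gF]) (simp_all add: christ2_gF_simps christ2_gF_solves)

lemma christ2_gF_u: "m \<le> k \<Longrightarrow> christ2 dim g a b x m = 0"
  by (simp add: christ2_gF christ2_gF_simps)

lemma christ2_gF_v: "j \<le> k \<Longrightarrow> christ2 dim g a b x (vidx k j) = christ1 g a b j x"
  by (simp add: christ2_gF christ2_gF_simps)

lemma christ2_gF_s: "i \<in> {1..k} \<Longrightarrow> christ2 dim g a b x (s i) = eps i * christ1 g a b (s i) x"
  by (simp add: christ2_gF christ2_gF_simps)

lemma sum_over_s:
  assumes "\<And>m. m \<le> k \<Longrightarrow> h m = 0" "\<And>j. j \<le> k \<Longrightarrow> h (vidx k j) = 0"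
  shows "(\<Sum>m<dim. h m) = (\<Sum>i\<in>{1..k}. h (s i))"
proof -
  have "(\<Sum>m<dim. h m) = (\<Sum>m\<in>s ` {1..k}. h m)"
  proof (rule sum.mono_neutral_right)
    show "\<forall>m\<in>{..<dim} - s ` {1..k}. h m = 0"
    proof
      fix m assume "m \<in> {..<dim} - s ` {1..k}"
      then have "m < dim" "m \<notin> s ` {1..k}" by auto
      then show "h m = 0" by (cases rule: coord_cases) (auto simp: assms)
    qed
  qed auto
  also have "\<dots> = (\<Sum>i\<in>{1..k}. h (s i))"
    by (rule sum.reindex_cong[where l = s]) (auto simp: inj_on_def)
  finally show ?thesis .
qed

lemma cov_christ2_u: "p \<le> k \<Longrightarrow> cov_vec dim g a (christ2 dim g b c) x p = 0"
  by (simp add: cov_vec_def christ2_gF_u)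

lemma cov_christ2_v:
  assumes "d \<le> k"
  shows "cov_vec dim g a (christ2 dim g b c) x (vidx k d) =
    (\<Sum>i\<in>{1..k}. dchrist1_block i a b c d x)
    + (\<Sum>i\<in>{1..k}. eps i * christ1_block i b c (s i) x * christ1_block i a (s i) d x)"
proof -
  have "(\<Sum>m<dim. christ2 dim g b c x m * christ2 dim g a m x (vidx k d))
      = (\<Sum>i\<in>{1..k}. christ2 dim g b c x (s i) * christ1 g a (s i) d x)"
    using assms by (subst sum_over_s) (auto simp: christ2_gF_u christ2_gF_v christ1_gF_vidx)
  also have "\<dots> = (\<Sum>i\<in>{1..k}. eps i * christ1_block i b c (s i) x * christ1_block i a (s i) d x)"
    by (rule sum.cong) (auto simp: christ2_gF_s christ1_gF_s)
  finally show ?thesis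
    using assms by (simp add: cov_vec_def christ2_gF_v pd_christ1_gF)
qed

lemma cov_christ2_s:
  assumes "j \<in> {1..k}"
  shows "cov_vec dim g a (christ2 dim g b c) x (s j) = eps j * (\<Sum>i\<in>{1..k}. dchrist1_block i a b c (s j) x)"
proof -
  have "(\<Sum>m<dim. christ2 dim g b c x m * christ2 dim g a m x (s j)) = 0"
    using assms
    by (subst sum_over_s) (auto simp: christ2_gF_u christ2_gF_s christ1_gF_vidx christ1_gF_s_s)
  moreover have "pd a (\<lambda>y. christ2 dim g b c y (s j)) x = eps j * (\<Sum>i\<in>{1..k}. dchrist1_block i a b c (s j) x)"
    using assms by (simp add: christ2_gF_s pd_eqI[OF DERIV_cmult[OF has_deriv_christ1_gF]])
  ultimately show ?thesis by (simp add: cov_vec_def)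
qed

text \<open>Only the \<epsilon>-part of the inverse metric contributes quadratic terms, and only for u-indices d.\<close>

definition riem_block :: "nat \<Rightarrow> nat \<Rightarrow> nat \<Rightarrow> nat \<Rightarrow> nat \<Rightarrow> (nat \<Rightarrow> real) \<Rightarrow> real" where
  "riem_block i a b c d x = dchrist1_block i a b c d x - dchrist1_block i b a c d x
     + (if d \<le> k then eps i * (christ1_block i b c (s i) x * christ1_block i a (s i) d x
                              - christ1_block i a c (s i) x * christ1_block i b (s i) d x) else 0)"

lemma riem_gF:
  assumes "c < dim" "d < dim"
  shows "riem dim g a b c d x = (\<Sum>i\<in>{1..k}. riem_block i a b c d x)"
  using assms(2)
proof (cases rule: coord_cases)
  case u
  have "riem dim g a b c d x = (cov_vec dim g a (christ2 dim g b c) x (vidx k d)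
      - cov_vec dim g b (christ2 dim g a c) x (vidx k d)) * g (vidx k d) d x"
    unfolding riem_eq_cov_vec_christ2[OF assms(1)]
  proof (rule sum_eq_single)
    fix p assume "p \<noteq> vidx k d"
    then show "(cov_vec dim g a (christ2 dim g b c) x p - cov_vec dim g b (christ2 dim g a c) x p) * g p d x = 0"
      using u by (cases "p \<le> k") (auto simp: cov_christ2_u gF_u_col)
  qed (use u in auto)
  then show ?thesis
    using u by (simp add: cov_christ2_v gF_u_col riem_block_def sum.distrib sum_subtractf
        sum_distrib_left algebra_simps)
next
  case (v j)
  have "riem dim g a b c d x = (cov_vec dim g a (christ2 dim g b c) x j
      - cov_vec dim g b (christ2 dim g a c) x j) * g j d x"
    unfolding riem_eq_cov_vec_christ2[OF assms(1)]
    by (rule sum_eq_single) (use v in \<open>auto simp: gF_vidx_col dim_def\<close>)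
  also have "\<dots> = (\<Sum>i\<in>{1..k}. riem_block i a b c d x)"
    using v by (simp add: cov_christ2_u riem_block_def dchrist1_block_outside)
  finally show ?thesis .
next
  case (s j)
  have "riem dim g a b c d x = (cov_vec dim g a (christ2 dim g b c) x d
      - cov_vec dim g b (christ2 dim g a c) x d) * g d d x"
    unfolding riem_eq_cov_vec_christ2[OF assms(1)]
    by (rule sum_eq_single) (use s in \<open>auto simp: gF_s_col\<close>)
  also have "\<dots> = (eps j * eps j) * (\<Sum>i\<in>{1..k}. dchrist1_block i a b c d x - dchrist1_block i b a c d x)"
    using s by (simp add: cov_christ2_s gF_s_col sum_subtractf algebra_simps)
  also have "\<dots> = (\<Sum>i\<in>{1..k}. riem_block i a b c d x)"
    using s eps_square[OF s(1)] by (simp add: riem_block_def)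
  finally show ?thesis .
qed

definition slot :: "nat \<Rightarrow> nat \<Rightarrow> block_slot" where
  "slot i a = (if a = 0 then U0 else if a = i then Ui else Si)"

definition slot_coord :: "nat \<Rightarrow> block_slot \<Rightarrow> nat" where
  "slot_coord i l = (case l of U0 \<Rightarrow> 0 | Ui \<Rightarrow> i | Si \<Rightarrow> s i)"

lemma slot_coord_slot: "i \<in> {1..k} \<Longrightarrow> a \<in> block i \<Longrightarrow> slot_coord i (slot i a) = a"
  by (auto simp: slot_coord_def slot_def block_def)

lemma slot_eq_iff:
  "i \<in> {1..k} \<Longrightarrow> a \<in> block i \<Longrightarrow> slot i a = Si \<longleftrightarrow> a = s i"
  "i \<in> {1..k} \<Longrightarrow> a \<in> block i \<Longrightarrow> slot i a = Ui \<longleftrightarrow> a = i"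
  by (auto simp: slot_def block_def)

lemma riem_block_table:
  assumes "i \<in> {1..k}"
  shows "riem_block i (slot_coord i la) (slot_coord i lb) (slot_coord i lc) (slot_coord i ld) x
    = riem_table (eps i) (f i (x i)) (deriv (f i) (x i)) la lb lc ld"
  using assms
  by (cases la; cases lb; cases lc; cases ld)
    (simp_all add: slot_coord_def riem_table_def riem_block_def dchrist1_block_def ddg_block_def
      ddg_0i_def ddg_ii_def christ1_block_def dg_block_def dg_0i_def dg_ii_def field_simps power2_eq_square)

lemma riem_block_outside:
  "i \<in> {1..k} \<Longrightarrow> \<not> {a, b, c, d} \<subseteq> block i \<Longrightarrow> riem_block i a b c d x = 0"
  unfolding riem_block_def using dchrist1_block_outside[of i] christ1_block_outside[of i] by auto

lemma riem_block_eq: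
  "i \<in> {1..k} \<Longrightarrow> riem_block i a b c d x = (if {a, b, c, d} \<subseteq> block i then
     riem_table (eps i) (f i (x i)) (deriv (f i) (x i)) (slot i a) (slot i b) (slot i c) (slot i d) else 0)"
  using riem_block_outside[of i a b c d x]
    riem_block_table[of i "slot i a" "slot i b" "slot i c" "slot i d" x] slot_coord_slot[of i]
  by auto

lemma diff_poly_f_has_deriv: "i \<in> {1..k} \<Longrightarrow> diff_poly (f i) h \<Longrightarrow> (h has_real_derivative deriv h t) (at t)"
  using diff_poly_has_deriv smooth by blast

lemma diff_poly_f_deriv: "i \<in> {1..k} \<Longrightarrow> diff_poly (f i) h \<Longrightarrow> diff_poly (f i) (deriv h)"
  using diff_poly_deriv smooth by blast

section \<open>Tensors in block form\<close>

definition s_count :: "nat \<Rightarrow> nat list \<Rightarrow> nat" where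
  "s_count i js = length (filter (\<lambda>a. a = s i) js)"

definition in_block :: "nat \<Rightarrow> nat list \<Rightarrow> bool" where
  "in_block i js \<longleftrightarrow> set js \<subseteq> block i \<and> s_count i js \<le> 1"

definition block_form :: "nat \<Rightarrow> ((nat \<Rightarrow> real) \<Rightarrow> nat list \<Rightarrow> real) \<Rightarrow> (nat list \<Rightarrow> nat \<Rightarrow> real \<Rightarrow> real) \<Rightarrow> bool" where
  "block_form L T G \<longleftrightarrow> (\<forall>js. \<forall>i\<in>{1..k}. diff_poly (f i) (G js i)) \<and>
     (\<forall>x js. length js = L \<longrightarrow> set js \<subseteq> {..<dim} \<longrightarrow>
        T x js = (\<Sum>i\<in>{1..k}. if in_block i js then G js i (x i) else 0))"

definition shear_sum :: "nat \<Rightarrow> ((nat \<Rightarrow> real) \<Rightarrow> nat list \<Rightarrow> real) \<Rightarrow> (nat \<Rightarrow> real) \<Rightarrow> nat list \<Rightarrow> real" where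
  "shear_sum i T x js = (\<Sum>j<length js. if js ! j = i then T x (js[j := s i]) else 0)"

text \<open>Infinitesimal invariance under the shear \<partial>u_i \<mapsto> \<partial>u_i + t \<partial>s_i.\<close>

definition shear_invariant :: "nat \<Rightarrow> ((nat \<Rightarrow> real) \<Rightarrow> nat list \<Rightarrow> real) \<Rightarrow> bool" where
  "shear_invariant L T \<longleftrightarrow>
     (\<forall>x js. \<forall>i\<in>{1..k}. length js = L \<longrightarrow> set js \<subseteq> {..<dim} \<longrightarrow> shear_sum i T x js = 0)"

definition corr_0i :: "nat \<Rightarrow> nat \<Rightarrow> ((nat \<Rightarrow> real) \<Rightarrow> nat list \<Rightarrow> real) \<Rightarrow> (nat \<Rightarrow> real) \<Rightarrow> nat list \<Rightarrow> real" where
  "corr_0i c i T x js =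
     (\<Sum>j<length js. if c = 0 \<and> js ! j = i \<or> c = i \<and> js ! j = 0 then T x (js[j := s i]) else 0)"

lemma block_form_eq:
  "block_form L T G \<Longrightarrow> length js = L \<Longrightarrow> set js \<subseteq> {..<dim} \<Longrightarrow>
     T x js = (\<Sum>i\<in>{1..k}. if in_block i js then G js i (x i) else 0)"
  by (simp add: block_form_def)

lemma block_form_diff_poly: "block_form L T G \<Longrightarrow> i \<in> {1..k} \<Longrightarrow> diff_poly (f i) (G js i)"
  by (simp add: block_form_def)

lemma block_form_s:
  assumes "block_form L T G" "length js = L" "set js \<subseteq> {..<dim}" "i \<in> {1..k}" "s i \<in> set js"
  shows "T x js = (if in_block i js then G js i (x i) else 0)"
  unfolding block_form_eq[OF assms(1-3)]
  by (rule sum_eq_single) (use assms in \<open>auto simp: in_block_def\<close>)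

lemma block_form_vidx:
  assumes "block_form L T G" "length js = L" "set js \<subseteq> {..<dim}" "j \<le> k" "vidx k j \<in> set js"
  shows "T x js = 0"
  unfolding block_form_eq[OF assms(1-3)]
  by (rule sum.neutral) (use assms in \<open>auto simp: in_block_def\<close>)

lemma has_deriv_block_form:
  assumes "block_form L T G" "length js = L" "set js \<subseteq> {..<dim}"
  shows "((\<lambda>t. T (x(c := t)) js) has_real_derivative
    (\<Sum>i\<in>{1..k}. if in_block i js \<and> c = i then deriv (G js i) (x i) else 0)) (at (x c))"
proof -
  have "((\<lambda>t. if in_block i js then G js i ((x(c := t)) i) else 0) has_real_derivative
      (if in_block i js \<and> c = i then deriv (G js i) (x i) else 0)) (at (x c))" if "i \<in> {1..k}" for i
  proof (cases "in_block i js \<and> c = i")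
    case True
    then show ?thesis
      using diff_poly_f_has_deriv[OF that block_form_diff_poly[OF assms(1) that]] by simp
  next
    case False
    then have "(\<lambda>t. if in_block i js then G js i ((x(c := t)) i) else 0)
        = (\<lambda>t. if in_block i js then G js i (x i) else 0)"
      and "(if in_block i js \<and> c = i then deriv (G js i) (x i) else 0) = 0" by auto
    then show ?thesis by simp
  qed
  then show ?thesis unfolding block_form_eq[OF assms] by (rule DERIV_sum)
qed

lemma pd_block_form:
  "block_form L T G \<Longrightarrow> length js = L \<Longrightarrow> set js \<subseteq> {..<dim} \<Longrightarrow>
     pd c (\<lambda>y. T y js) x = (\<Sum>i\<in>{1..k}. if in_block i js \<and> c = i then deriv (G js i) (x i) else 0)"
  by (rule pd_eqI[OF has_deriv_block_form])

lemma set_update_subset_dim: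
  "set js \<subseteq> {..<dim} \<Longrightarrow> m < dim \<Longrightarrow> set (js[j := m]) \<subseteq> {..<dim}"
  using set_update_subset_insert[of js j m] by auto

lemma sum_christ2_contract:
  assumes B: "block_form L T G" and bl: "length bl = L" "set bl \<subseteq> {..<dim}" and j: "j < L"
  shows "(\<Sum>m<dim. christ2 dim g c (bl ! j) x m * T x (bl[j := m])) =
    (\<Sum>i\<in>{1..k}. eps i * christ1_block i c (bl ! j) (s i) x * T x (bl[j := s i]))"
proof -
  have "T x (bl[j := vidx k j']) = 0" if "j' \<le> k" for j'
    using that bl j
    by (intro block_form_vidx[OF B, of _ j']) (auto simp: set_update_subset_dim set_update_memI)
  then have "(\<Sum>m<dim. christ2 dim g c (bl ! j) x m * T x (bl[j := m])) =
      (\<Sum>i\<in>{1..k}. christ2 dim g c (bl ! j) x (s i) * T x (bl[j := s i]))"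
    by (intro sum_over_s) (auto simp: christ2_gF_u)
  also have "\<dots> = (\<Sum>i\<in>{1..k}. eps i * christ1_block i c (bl ! j) (s i) x * T x (bl[j := s i]))"
    by (rule sum.cong) (auto simp: christ2_gF_s christ1_gF_s)
  finally show ?thesis .
qed

lemma christ1_block_contract:
  assumes "i \<in> {1..k}"
  shows "(\<Sum>j<length bl. christ1_block i c (bl ! j) (s i) x * T x (bl[j := s i]))
    = - f i (x i) * corr_0i c i T x bl + (if c = i then x 0 * shear_sum i T x bl else 0)"
proof -
  have "christ1_block i c (bl ! j) (s i) x * T x (bl[j := s i])
      = - f i (x i) * (if c = 0 \<and> bl ! j = i \<or> c = i \<and> bl ! j = 0 then T x (bl[j := s i]) else 0)
        + (if c = i then x 0 * (if bl ! j = i then T x (bl[j := s i]) else 0) else 0)" for j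
    using assms by (auto simp: christ1_block_s)
  then show ?thesis
    by (cases "c = i") (simp_all add: corr_0i_def shear_sum_def sum.distrib sum_subtractf sum_negf sum_distrib_left)
qed

text \<open>Against T, the Christoffel symbols contract to \<Gamma>^(s_i)_(c b) = -\<epsilon>_i f_i for {c,b} = {0,i} and
  \<Gamma>^(s_i)_(i i) = \<epsilon>_i u_0; the latter terms cancel by shear invariance.\<close>

lemma cov_tensor_snoc:
  assumes B: "block_form L T G" and S: "shear_invariant L T"
    and bl: "length bl = L" "set bl \<subseteq> {..<dim}"
  shows "cov_tensor dim g T x (bl @ [c]) =
    pd c (\<lambda>y. T y bl) x + (\<Sum>i\<in>{1..k}. eps i * f i (x i) * corr_0i c i T x bl)"
proof -
  have "(\<Sum>j<L. \<Sum>m<dim. christ2 dim g c (bl ! j) x m * T x (bl[j := m]))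
      = (\<Sum>i\<in>{1..k}. eps i * (\<Sum>j<L. christ1_block i c (bl ! j) (s i) x * T x (bl[j := s i])))"
    by (simp add: sum_christ2_contract[OF B bl] sum_distrib_left mult.assoc sum.swap[of _ "{..<L}"])
  also have "\<dots> = (\<Sum>i\<in>{1..k}. - (eps i * f i (x i) * corr_0i c i T x bl))"
    using S bl by (intro sum.cong) (auto simp: christ1_block_contract[simplified bl] shear_invariant_def)
  finally show ?thesis
    using bl by (simp add: cov_tensor_def sum_negf)
qed

lemma cov_tensor_snoc_s:
  assumes "block_form L T G" "shear_invariant L T" "length bl = L" "set bl \<subseteq> {..<dim}" "i \<in> {1..k}"
  shows "cov_tensor dim g T x (bl @ [s i]) = 0"
  using assms by (simp add: cov_tensor_snoc pd_block_form corr_0i_def)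

lemma cov_tensor_snoc_0:
  assumes "block_form L T G" "shear_invariant L T" "length bl = L" "set bl \<subseteq> {..<dim}"
  shows "cov_tensor dim g T x (bl @ [0]) = 0"
proof -
  have "corr_0i 0 i T x bl = shear_sum i T x bl" if "i \<in> {1..k}" for i
    using that by (auto simp: corr_0i_def shear_sum_def intro!: sum.cong)
  then show ?thesis
    using assms by (simp add: cov_tensor_snoc pd_block_form shear_invariant_def)
qed

lemma s_count_update:
  "j < length js \<Longrightarrow> s_count i (js[j := a]) + (if js ! j = s i then 1 else 0)
     = s_count i js + (if a = s i then 1 else 0)"
proof (induction js arbitrary: j)
  case (Cons b js)
  show ?case
  proof (cases j)
    case (Suc j')
    with Cons.prems have "j' < length js" by simp
    from Cons.IH[OF this] show ?thesis
      using Suc by (cases "a = s i"; cases "js ! j' = s i") (simp_all add: s_count_def)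
  qed (simp add: s_count_def)
qed simp

lemma in_block_snoc_self: "i \<in> {1..k} \<Longrightarrow> in_block i bl \<Longrightarrow> in_block i (bl @ [i])"
  by (auto simp: in_block_def s_count_def block_def)

lemma in_block_snoc_shear:
  assumes "i \<in> {1..k}" "j < length bl" "in_block i (bl[j := s i])" "bl ! j \<in> {0, i}" "c \<in> {0, i}"
  shows "in_block i (bl @ [c])"
proof -
  have "set bl \<subseteq> insert (bl ! j) (set (bl[j := s i]))"
    using set_update_subset_insert[of "bl[j := s i]" j "bl ! j"] assms(2) by simp
  then have "set bl \<subseteq> block i" using assms(3,4) by (auto simp: in_block_def block_def)
  moreover have "s_count i bl = 0"
    using s_count_update[OF assms(2), of i "s i"] assms by (auto simp: in_block_def)
  ultimately show ?thesis using assms(1,5) by (auto simp: in_block_def s_count_def block_def)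
qed

definition cov_block :: "(nat list \<Rightarrow> nat \<Rightarrow> real \<Rightarrow> real) \<Rightarrow> nat list \<Rightarrow> nat \<Rightarrow> nat \<Rightarrow> real \<Rightarrow> real" where
  "cov_block G bl c i t =
     (if in_block i bl \<and> c = i then deriv (G bl i) t else 0)
     + eps i * f i t * (\<Sum>j<length bl. if (c = 0 \<and> bl ! j = i \<or> c = i \<and> bl ! j = 0) \<and> in_block i (bl[j := s i])
                                      then G (bl[j := s i]) i t else 0)"

lemma diff_poly_cov_block:
  assumes "i \<in> {1..k}" "\<And>js. diff_poly (f i) (G js i)"
  shows "diff_poly (f i) (cov_block G bl c i)"
proof -
  have "diff_poly (f i) (\<lambda>t. if in_block i bl \<and> c = i then deriv (G bl i) t else 0)"
    by (intro diff_poly_if diff_poly_f_deriv assms)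
  moreover have "diff_poly (f i) (\<lambda>t. eps i * f i t * (\<Sum>j<length bl. if (c = 0 \<and> bl ! j = i \<or> c = i \<and> bl ! j = 0)
      \<and> in_block i (bl[j := s i]) then G (bl[j := s i]) i t else 0))"
    using diff_poly.deriv_iter[of "f i" 0]
    by (intro diff_poly.mult diff_poly.const diff_poly_sum diff_poly_if assms) auto
  ultimately show ?thesis unfolding cov_block_def by (rule diff_poly.add)
qed

lemma cov_block_outside:
  assumes "i \<in> {1..k}" "\<not> in_block i (bl @ [c])"
  shows "cov_block G bl c i t = 0"
proof -
  have no_deriv: "\<not> (in_block i bl \<and> c = i)" using assms in_block_snoc_self by blast
  have no_corr: "\<not> ((c = 0 \<and> bl ! j = i \<or> c = i \<and> bl ! j = 0) \<and> in_block i (bl[j := s i]))"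
    if "j < length bl" for j
  proof
    assume "(c = 0 \<and> bl ! j = i \<or> c = i \<and> bl ! j = 0) \<and> in_block i (bl[j := s i])"
    then have "bl ! j \<in> {0, i}" "c \<in> {0, i}" "in_block i (bl[j := s i])" by auto
    then show False using assms(2) in_block_snoc_shear[OF assms(1) that] by blast
  qed
  have "(\<Sum>j<length bl. if (c = 0 \<and> bl ! j = i \<or> c = i \<and> bl ! j = 0) \<and> in_block i (bl[j := s i])
      then G (bl[j := s i]) i t else 0) = 0"
  proof (rule sum.neutral, rule ballI)
    fix j assume "j \<in> {..<length bl}"
    then have "j < length bl" by simp
    from no_corr[OF this] show "(if (c = 0 \<and> bl ! j = i \<or> c = i \<and> bl ! j = 0) \<and> in_block i (bl[j := s i])
      then G (bl[j := s i]) i t else 0) = 0" by (rule if_not_P)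
  qed
  then show ?thesis unfolding cov_block_def if_not_P[OF no_deriv] by simp
qed

lemma cov_tensor_cov_block:
  assumes B: "block_form L T G" and S: "shear_invariant L T"
    and bl: "length bl = L" "set bl \<subseteq> {..<dim}"
  shows "cov_tensor dim g T x (bl @ [c]) = (\<Sum>i\<in>{1..k}. cov_block G bl c i (x i))"
proof -
  have "corr_0i c i T x bl = (\<Sum>j<L. if (c = 0 \<and> bl ! j = i \<or> c = i \<and> bl ! j = 0) \<and> in_block i (bl[j := s i])
      then G (bl[j := s i]) i (x i) else 0)" if "i \<in> {1..k}" for i
    unfolding corr_0i_def bl(1)
    using that bl by (intro sum.cong refl)
      (auto simp: block_form_s[OF B] set_update_subset_dim set_update_memI)
  then show ?thesis
    by (simp add: cov_tensor_snoc[OF B S bl] pd_block_form[OF B bl] cov_block_def bl sum.distrib)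
qed

lemma block_form_cov_tensor:
  assumes B: "block_form L T G" and S: "shear_invariant L T"
  shows "block_form (Suc L) (cov_tensor dim g T) (\<lambda>js. cov_block G (butlast js) (last js))"
  unfolding block_form_def
proof (intro conjI allI ballI impI)
  fix js i assume "i \<in> {1..k}"
  then show "diff_poly (f i) (cov_block G (butlast js) (last js) i)"
    by (intro diff_poly_cov_block block_form_diff_poly[OF B])
next
  fix x js assume js: "length js = Suc L" "set js \<subseteq> {..<dim}"
  then obtain bl c where js_eq: "js = bl @ [c]" by (cases js rule: rev_cases) auto
  with js have bl: "length bl = L" "set bl \<subseteq> {..<dim}" by auto
  show "cov_tensor dim g T x js =
      (\<Sum>i\<in>{1..k}. if in_block i js then cov_block G (butlast js) (last js) i (x i) else 0)"
    unfolding js_eq cov_tensor_cov_block[OF B S bl]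
    by (intro sum.cong refl) (auto simp: cov_block_outside)
qed

lemma corr_0i_shear_swap:
  assumes "i \<in> {1..k}" "i' \<in> {1..k}"
  shows "(\<Sum>j<length bl. if bl ! j = i then corr_0i c i' T x (bl[j := s i]) else 0)
    = (\<Sum>j'<length bl. if c = 0 \<and> bl ! j' = i' \<or> c = i' \<and> bl ! j' = 0
                       then shear_sum i T x (bl[j' := s i']) else 0)"
proof -
  \<comment> \<open>Both sides sum T over the lists with one slot i replaced by s i and another slot
    replaced by s i'; the diagonal j = j' contributes to neither.\<close>
  have swap: "(if bl ! j = i then (if c = 0 \<and> bl[j := s i] ! j' = i' \<or> c = i' \<and> bl[j := s i] ! j' = 0
          then T x ((bl[j := s i])[j' := s i']) else 0) else 0)
      = (if c = 0 \<and> bl ! j' = i' \<or> c = i' \<and> bl ! j' = 0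
          then (if bl[j' := s i'] ! j = i then T x ((bl[j' := s i'])[j := s i]) else 0) else 0)"
    if "j < length bl" "j' < length bl" for j j'
    using that assms by (cases "j = j'") (auto simp: list_update_swap)
  have "(\<Sum>j<length bl. if bl ! j = i then corr_0i c i' T x (bl[j := s i]) else 0)
      = (\<Sum>j<length bl. \<Sum>j'<length bl.
          if bl ! j = i then (if c = 0 \<and> bl[j := s i] ! j' = i' \<or> c = i' \<and> bl[j := s i] ! j' = 0
            then T x ((bl[j := s i])[j' := s i']) else 0) else 0)"
    by (intro sum.cong refl) (simp add: corr_0i_def)
  also have "\<dots> = (\<Sum>j'<length bl. \<Sum>j<length bl.
          if c = 0 \<and> bl ! j' = i' \<or> c = i' \<and> bl ! j' = 0
            then (if bl[j' := s i'] ! j = i then T x ((bl[j' := s i'])[j := s i]) else 0) else 0)"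
    by (subst sum.swap) (intro sum.cong refl swap; simp)
  also have "\<dots> = (\<Sum>j'<length bl. if c = 0 \<and> bl ! j' = i' \<or> c = i' \<and> bl ! j' = 0
                       then shear_sum i T x (bl[j' := s i']) else 0)"
  proof (intro sum.cong refl)
    fix j'
    show "(\<Sum>j<length bl. if c = 0 \<and> bl ! j' = i' \<or> c = i' \<and> bl ! j' = 0
            then (if bl[j' := s i'] ! j = i then T x ((bl[j' := s i'])[j := s i]) else 0) else 0)
        = (if c = 0 \<and> bl ! j' = i' \<or> c = i' \<and> bl ! j' = 0 then shear_sum i T x (bl[j' := s i']) else 0)"
    proof (cases "c = 0 \<and> bl ! j' = i' \<or> c = i' \<and> bl ! j' = 0")
      case True
      then show ?thesis unfolding if_P[OF True] by (simp add: shear_sum_def)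
    next
      case False
      then show ?thesis unfolding if_not_P[OF False] by simp
    qed
  qed
  finally show ?thesis .
qed

lemma sum_pd_shear_eq_0:
  assumes B: "block_form L T G" and S: "shear_invariant L T"
    and bl: "length bl = L" "set bl \<subseteq> {..<dim}" and i: "i \<in> {1..k}"
  shows "(\<Sum>j<L. if bl ! j = i then pd c (\<lambda>y. T y (bl[j := s i])) x else 0) = 0"
proof -
  have bl_j: "length (bl[j := s i]) = L" "set (bl[j := s i]) \<subseteq> {..<dim}" for j
    using bl i by (auto simp: set_update_subset_dim)
  have "((\<lambda>t. T (x(c := t)) (bl[j := s i])) has_real_derivative pd c (\<lambda>y. T y (bl[j := s i])) x) (at (x c))"
    for j using has_deriv_block_form[OF B bl_j] pd_block_form[OF B bl_j] by simp
  then have "((\<lambda>t. shear_sum i T (x(c := t)) bl) has_real_derivative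
      (\<Sum>j<L. if bl ! j = i then pd c (\<lambda>y. T y (bl[j := s i])) x else 0)) (at (x c))"
    unfolding shear_sum_def bl(1) by (intro DERIV_sum) auto
  moreover have "(\<lambda>t. shear_sum i T (x(c := t)) bl) = (\<lambda>t. 0)"
    using S bl i by (auto simp: shear_invariant_def)
  ultimately have "((\<lambda>t. 0) has_real_derivative
      (\<Sum>j<L. if bl ! j = i then pd c (\<lambda>y. T y (bl[j := s i])) x else 0)) (at (x c))" by simp
  then show ?thesis by (rule DERIV_unique[OF _ DERIV_const])
qed

lemma sum_corr_0i_shear_eq_0:
  assumes S: "shear_invariant L T" and bl: "length bl = L" "set bl \<subseteq> {..<dim}"
    and i: "i \<in> {1..k}" "i' \<in> {1..k}"
  shows "(\<Sum>j<L. if bl ! j = i then corr_0i c i' T x (bl[j := s i]) else 0) = 0"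
proof -
  have shear_0: "shear_sum i T x (bl[j' := s i']) = 0" for j'
    using S bl i by (simp add: shear_invariant_def set_update_subset_dim)
  show ?thesis unfolding bl(1)[symmetric] corr_0i_shear_swap[OF i]
    by (intro sum.neutral ballI) (simp only: shear_0 if_cancel)
qed

lemma shear_invariant_cov_tensor:
  assumes B: "block_form L T G" and S: "shear_invariant L T"
  shows "shear_invariant (Suc L) (cov_tensor dim g T)"
  unfolding shear_invariant_def
proof (intro allI ballI impI)
  fix x js i assume i: "i \<in> {1..k}" and js: "length js = Suc L" "set js \<subseteq> {..<dim}"
  then obtain bl c where js_eq: "js = bl @ [c]" by (cases js rule: rev_cases) auto
  with js have bl: "length bl = L" "set bl \<subseteq> {..<dim}" by auto
  have bl_j: "length (bl[j := s i]) = L" "set (bl[j := s i]) \<subseteq> {..<dim}" for j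
    using bl i by (auto simp: set_update_subset_dim)
  have split: "(if bl ! j = i then cov_tensor dim g T x (bl[j := s i] @ [c]) else 0)
      = (if bl ! j = i then pd c (\<lambda>y. T y (bl[j := s i])) x else 0)
        + (\<Sum>i'\<in>{1..k}. eps i' * f i' (x i') * (if bl ! j = i then corr_0i c i' T x (bl[j := s i]) else 0))" for j
    by (cases "bl ! j = i") (simp_all add: cov_tensor_snoc[OF B S bl_j])
  have "shear_sum i (cov_tensor dim g T) x js
      = (\<Sum>j<L. if bl ! j = i then cov_tensor dim g T x (bl[j := s i] @ [c]) else 0)
        + (if c = i then cov_tensor dim g T x (bl @ [s i]) else 0)"
    unfolding bl(1)[symmetric]
    by (simp add: shear_sum_def js_eq nth_append) (rule sum.cong; simp add: list_update_append1)
  also have "\<dots> = (\<Sum>j<L. if bl ! j = i then pd c (\<lambda>y. T y (bl[j := s i])) x else 0)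
      + (\<Sum>i'\<in>{1..k}. eps i' * f i' (x i') * (\<Sum>j<L. if bl ! j = i then corr_0i c i' T x (bl[j := s i]) else 0))"
    unfolding split sum.distrib cov_tensor_snoc_s[OF B S bl i]
    by (simp add: sum_distrib_left sum.swap[of _ "{..<L}"])
  also have "\<dots> = 0"
    using sum_pd_shear_eq_0[OF B S bl i] sum_corr_0i_shear_eq_0[OF S bl i] by simp
  finally show "shear_sum i (cov_tensor dim g T) x js = 0" .
qed

section \<open>Covariant derivatives of the curvature tensor\<close>

lemma riem_gF_s:
  assumes "{a, b, c, d} \<subseteq> {..<dim}" "i \<in> {1..k}" "s i \<in> {a, b, c, d}"
  shows "riem dim g a b c d x = riem_block i a b c d x"
proof -
  have "c < dim" "d < dim" using assms(1) by auto
  then show ?thesis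
    unfolding riem_gF[OF \<open>c < dim\<close> \<open>d < dim\<close>]
    using assms by (intro sum_eq_single riem_block_outside) auto
qed

lemma riem_block_in_block:
  assumes "i \<in> {1..k}"
  shows "riem_block i a b c d x = (if in_block i [a, b, c, d] then
     riem_table (eps i) (f i (x i)) (deriv (f i) (x i)) (slot i a) (slot i b) (slot i c) (slot i d) else 0)"
proof (cases "{a, b, c, d} \<subseteq> block i")
  case True
  then have "length (filter (\<lambda>l. l = Si) [slot i a, slot i b, slot i c, slot i d]) = s_count i [a, b, c, d]"
    using assms by (simp add: s_count_def slot_eq_iff)
  then show ?thesis
    using True assms riem_table_two_Si by (auto simp: riem_block_eq in_block_def)
next
  case False
  then show ?thesis using assms by (auto simp: riem_block_eq in_block_def)
qed

definition riem_jet :: "nat list \<Rightarrow> nat \<Rightarrow> real \<Rightarrow> real" where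
  "riem_jet js i t = riem_table (eps i) (f i t) (deriv (f i) t)
     (slot i (js ! 0)) (slot i (js ! 1)) (slot i (js ! 2)) (slot i (js ! 3))"

lemma length_4_cases: "length js = 4 \<Longrightarrow> \<exists>a b c d. js = [a, b, c, d]"
  by (auto simp: eval_nat_numeral length_Suc_conv)

lemma block_form_riem: "block_form 4 (nabla_R dim g 0) riem_jet"
  unfolding block_form_def
proof (intro conjI allI ballI impI)
  fix js i
  show "diff_poly (f i) (riem_jet js i)"
    unfolding riem_jet_def by (rule diff_poly_riem_table)
next
  fix x js assume js: "length js = 4" "set js \<subseteq> {..<dim}"
  then obtain a b c d where js_eq: "js = [a, b, c, d]" using length_4_cases by blast
  show "nabla_R dim g 0 x js = (\<Sum>i\<in>{1..k}. if in_block i js then riem_jet js i (x i) else 0)"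
    using js unfolding js_eq riem_jet_def
    by (simp add: nabla_R_def riem_gF riem_block_in_block cong: if_cong)
qed

lemma slot_s [simp]: "i \<le> k \<Longrightarrow> slot i (s i) = Si"
  by (simp add: slot_def)

lemma shear_sum_riem:
  assumes "{a, b, c, d} \<subseteq> {..<dim}" "i \<in> {1..k}"
  shows "shear_sum i (nabla_R dim g 0) x [a, b, c, d] = 0"
proof -
  have "shear_sum i (nabla_R dim g 0) x [a, b, c, d] =
      (if a = i then riem_block i (s i) b c d x else 0) + (if b = i then riem_block i a (s i) c d x else 0)
      + (if c = i then riem_block i a b (s i) d x else 0) + (if d = i then riem_block i a b c (s i) x else 0)"
  proof -
    have "{s i, b, c, d} \<subseteq> {..<dim}" "{a, s i, c, d} \<subseteq> {..<dim}" "{a, b, s i, d} \<subseteq> {..<dim}"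
      "{a, b, c, s i} \<subseteq> {..<dim}" using assms by auto
    note riem_s = this[THEN riem_gF_s[OF _ assms(2)]]
    show ?thesis
      by (simp add: shear_sum_def nabla_R_def eval_nat_numeral riem_s)
  qed
  also have "\<dots> = 0"
  proof (cases "{a, b, c, d} \<subseteq> block i")
    case True
    let ?R = "riem_table (eps i) (f i (x i)) (deriv (f i) (x i))"
    have "(if a = i then riem_block i (s i) b c d x else 0)
        = (if slot i a = Ui then ?R Si (slot i b) (slot i c) (slot i d) else 0)"
      and "(if b = i then riem_block i a (s i) c d x else 0)
        = (if slot i b = Ui then ?R (slot i a) Si (slot i c) (slot i d) else 0)"
      and "(if c = i then riem_block i a b (s i) d x else 0)
        = (if slot i c = Ui then ?R (slot i a) (slot i b) Si (slot i d) else 0)"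
      and "(if d = i then riem_block i a b c (s i) x else 0)
        = (if slot i d = Ui then ?R (slot i a) (slot i b) (slot i c) Si else 0)"
      using True assms by (simp_all add: riem_block_eq slot_eq_iff)
    then show ?thesis by (simp only: riem_table_shear)
  next
    case False
    then have "\<not> {s i, b, c, d} \<subseteq> block i \<or> a \<noteq> i" "\<not> {a, s i, c, d} \<subseteq> block i \<or> b \<noteq> i"
      "\<not> {a, b, s i, d} \<subseteq> block i \<or> c \<noteq> i" "\<not> {a, b, c, s i} \<subseteq> block i \<or> d \<noteq> i"
      by auto
    then show ?thesis by (elim disjE) (simp_all add: riem_block_outside[OF assms(2)])
  qed
  finally show ?thesis .
qed

lemma shear_invariant_riem: "shear_invariant 4 (nabla_R dim g 0)"
  unfolding shear_invariant_def
proof (intro allI ballI impI)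
  fix x js i assume i: "i \<in> {1..k}" and js: "length js = 4" "set js \<subseteq> {..<dim}"
  then obtain a b c d where js_eq: "js = [a, b, c, d]" using length_4_cases by blast
  show "shear_sum i (nabla_R dim g 0) x js = 0"
    using js i unfolding js_eq by (intro shear_sum_riem) auto
qed

lemma nabla_R_Suc: "nabla_R dim g (Suc l) = cov_tensor dim g (nabla_R dim g l)"
  by (simp add: nabla_R_def)

lemma nabla_R_invariants:
  "\<exists>G. block_form (4 + l) (nabla_R dim g l) G \<and> shear_invariant (4 + l) (nabla_R dim g l)"
proof (induction l)
  case 0
  show ?case using block_form_riem shear_invariant_riem by auto
next
  case (Suc l)
  then obtain G where "block_form (4 + l) (nabla_R dim g l) G" "shear_invariant (4 + l) (nabla_R dim g l)"
    by blast
  then show ?case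
    unfolding add_Suc_right nabla_R_Suc using block_form_cov_tensor shear_invariant_cov_tensor by blast
qed

text \<open>The only correction term replaces the leading 0 by s i, producing two entries s i.\<close>

lemma corr_0i_0_i_i_s:
  assumes B: "block_form (4 + l) T G" and i: "i \<in> {1..k}" "i' \<in> {1..k}"
  shows "corr_0i i i' T x ([0, i, i, s i] @ replicate l i) = 0"
proof -
  define rest where "rest = [i, i, s i] @ replicate l i"
  have js: "[0, i, i, s i] @ replicate l i = 0 # rest" by (simp add: rest_def)
  have rest_nonzero: "rest ! j \<noteq> 0" if "j < length rest" for j
  proof -
    have "0 \<notin> set rest" using i by (auto simp: rest_def)
    with that show ?thesis by (metis nth_mem)
  qed
  have "\<not> in_block i (s i # rest)" using i by (simp add: rest_def in_block_def s_count_def)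
  moreover have "T x (s i # rest) = (if in_block i (s i # rest) then G (s i # rest) i (x i) else 0)"
    using i by (intro block_form_s[OF B]) (auto simp: rest_def)
  ultimately have T_zero: "T x (s i # rest) = 0" by simp
  show ?thesis
    unfolding corr_0i_def js
  proof (intro sum.neutral ballI)
    fix j assume "j \<in> {..<length (0 # rest)}"
    then show "(if i = 0 \<and> (0 # rest) ! j = i' \<or> i = i' \<and> (0 # rest) ! j = 0
        then T x ((0 # rest)[j := s i']) else 0) = 0"
      using i T_zero by (cases j) (auto dest: rest_nonzero)
  qed
qed

lemma nabla_R_0_i_i_s:
  assumes i: "i \<in> {1..k}"
  shows "nabla_R dim g l x ([0, i, i, s i] @ replicate l i)
    = (if l = 0 then 1 else 0) + (deriv ^^ Suc l) (f i) (x i)"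
proof (induction l arbitrary: x)
  case 0
  have "nabla_R dim g 0 x [0, i, i, s i] = riem_block i 0 i i (s i) x"
    using i by (simp add: nabla_R_def riem_gF_s)
  also have "\<dots> = 1 + deriv (f i) (x i)"
    using i by (simp add: riem_block_eq slot_def riem_table_def)
  finally show ?case by simp
next
  case (Suc l)
  obtain G where B: "block_form (4 + l) (nabla_R dim g l) G" and S: "shear_invariant (4 + l) (nabla_R dim g l)"
    using nabla_R_invariants by blast
  define bl where "bl = [0, i, i, s i] @ replicate l i"
  have bl: "length bl = 4 + l" "set bl \<subseteq> {..<dim}" using i by (auto simp: bl_def)
  have deriv_part: "pd i (\<lambda>y. nabla_R dim g l y bl) x = (deriv ^^ Suc (Suc l)) (f i) (x i)"
  proof (rule pd_eqI)
    have "(\<lambda>t. nabla_R dim g l (x(i := t)) bl) = (\<lambda>t. (if l = 0 then 1 else 0) + (deriv ^^ Suc l) (f i) t)"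
      using Suc.IH by (simp add: bl_def)
    then show "((\<lambda>t. nabla_R dim g l (x(i := t)) bl) has_real_derivative (deriv ^^ Suc (Suc l)) (f i) (x i))
        (at (x i))"
      using DERIV_add[OF DERIV_const has_deriv_f_iter[OF i, of "Suc l" "x i"]] by simp
  qed
  have corr_part: "corr_0i i i' (nabla_R dim g l) x bl = 0" if "i' \<in> {1..k}" for i'
    unfolding bl_def using B i that by (rule corr_0i_0_i_i_s)
  have "nabla_R dim g (Suc l) x ([0, i, i, s i] @ replicate (Suc l) i) = cov_tensor dim g (nabla_R dim g l) x (bl @ [i])"
    by (simp add: nabla_R_Suc bl_def replicate_append_same)
  also have "\<dots> = (deriv ^^ Suc (Suc l)) (f i) (x i)"
    using deriv_part corr_part by (simp add: cov_tensor_snoc[OF B S bl])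
  finally show ?case by simp
qed

lemma nabla_R_0_i_i_0:
  assumes i: "i \<in> {1..k}"
  shows "\<exists>N E c. finite E \<and>
    (\<forall>x. nabla_R dim g l x ([0, i, i, 0] @ replicate l i) = jet_poly N E c (\<lambda>j. (deriv ^^ j) (f i) (x i)))"
proof -
  obtain G where B: "block_form (4 + l) (nabla_R dim g l) G" using nabla_R_invariants by blast
  define js where "js = [0, i, i, 0] @ replicate l i"
  have js: "length js = 4 + l" "set js \<subseteq> {..<dim}" using i by (auto simp: js_def)
  have "in_block i' js \<longleftrightarrow> i' = i" if "i' \<in> {1..k}" for i'
    using i that by (auto simp: in_block_def js_def block_def s_count_def)
  then have "nabla_R dim g l x js = G js i (x i)" for x
    unfolding block_form_eq[OF B js] using i by (subst sum_eq_single[of _ i]) auto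
  moreover obtain N E c where "finite E" "\<forall>t. G js i t = jet_poly N E c (\<lambda>j. (deriv ^^ j) (f i) t)"
    using diff_poly_jet_poly[OF block_form_diff_poly[OF B i]] by blast
  ultimately show ?thesis unfolding js_def by auto
qed

lemma tensor_apply_nabla_R_snoc_cvec:
  assumes "1 \<le> l" "c = 0 \<or> (\<exists>i\<in>{1..k}. c = s i)" "length Xs = 4" "length Ys = l - 1"
  shows "tensor_apply dim (nabla_R dim g l) x (Xs @ Ys @ [cvec c]) = 0"
proof -
  obtain m where l: "l = Suc m" using assms(1) by (cases l) auto
  obtain G where B: "block_form (4 + m) (nabla_R dim g m) G" and S: "shear_invariant (4 + m) (nabla_R dim g m)"
    using nabla_R_invariants by blast
  have "nabla_R dim g l x (ms @ [c]) = 0" if "length ms = length (Xs @ Ys)" "set ms \<subseteq> {..<dim}" for ms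
    using assms(2) cov_tensor_snoc_0[OF B S _ that(2)] cov_tensor_snoc_s[OF B S _ that(2)] that(1) assms(3,4)
    by (auto simp: l nabla_R_Suc)
  then show ?thesis using tensor_apply_snoc_cvec_eq_0[of "Xs @ Ys"] by simp
qed

end

theorem lemma5p1:
  fixes k :: nat and eps :: "nat \<Rightarrow> real" and f :: "nat \<Rightarrow> real \<Rightarrow> real"
  assumes k: "k \<ge> 1"
    and eps: "\<forall>i\<in>{1..k}. eps i = 1 \<or> eps i = -1"
    and smooth: "\<forall>i\<in>{1..k}. \<forall>m t. (deriv ^^ m) (f i) differentiable (at t)"
  shows "\<forall>l\<ge>1. \<forall>i\<in>{1..k}.
     (\<forall>x. nabla_R (3*k+2) (gF k eps f) l x ([0, i, i, sidx k i] @ replicate l i)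
          = (deriv ^^ (l+1)) (f i) (x i))
   \<and> (\<exists>N E c. finite E \<and> (\<forall>x. nabla_R (3*k+2) (gF k eps f) l x ([0, i, i, 0] @ replicate l i)
          = jet_poly N E c (\<lambda>j. (deriv ^^ j) (f i) (x i))))
   \<and> (\<forall>x Xs Ys. length Xs = 4 \<longrightarrow> length Ys = l - 1 \<longrightarrow>
        tensor_apply (3*k+2) (nabla_R (3*k+2) (gF k eps f) l) x (Xs @ Ys @ [cvec (sidx k i)]) = 0)
   \<and> (\<forall>x Xs Ys. length Xs = 4 \<longrightarrow> length Ys = l - 1 \<longrightarrow>
        tensor_apply (3*k+2) (nabla_R (3*k+2) (gF k eps f) l) x (Xs @ Ys @ [cvec 0]) = 0)"
proof -
  interpret gF_metric k eps f
    using eps smooth by unfold_locales auto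
  have dim: "3 * k + 2 = dim" by (simp add: dim_def)
  show ?thesis
    unfolding dim
  proof (intro allI impI ballI conjI)
    fix l i :: nat and x :: "nat \<Rightarrow> real" assume "1 \<le> l" "i \<in> {1..k}"
    then show "nabla_R dim g l x ([0, i, i, sidx k i] @ replicate l i) = (deriv ^^ (l + 1)) (f i) (x i)"
      using nabla_R_0_i_i_s[of i l x] by simp
  next
    fix l i :: nat assume "i \<in> {1..k}"
    then show "\<exists>N E c. finite E \<and> (\<forall>x. nabla_R dim g l x ([0, i, i, 0] @ replicate l i)
        = jet_poly N E c (\<lambda>j. (deriv ^^ j) (f i) (x i)))"
      by (rule nabla_R_0_i_i_0)
  next
    fix l i :: nat and x :: "nat \<Rightarrow> real" and Xs Ys :: "(nat \<Rightarrow> real) list"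
    assume "1 \<le> l" "i \<in> {1..k}" "length Xs = 4" "length Ys = l - 1"
    then show "tensor_apply dim (nabla_R dim g l) x (Xs @ Ys @ [cvec (sidx k i)]) = 0"
      by (intro tensor_apply_nabla_R_snoc_cvec) auto
  next
    fix l :: nat and x :: "nat \<Rightarrow> real" and Xs Ys :: "(nat \<Rightarrow> real) list"
    assume "1 \<le> l" "length Xs = 4" "length Ys = l - 1"
    then show "tensor_apply dim (nabla_R dim g l) x (Xs @ Ys @ [cvec 0]) = 0"
      by (intro tensor_apply_nabla_R_snoc_cvec) auto
  qed
qed

end
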